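(* Let $K\ge 2$, $\eta>0$, and $\mathbf r\in\mathbb R^K$. For $\boldsymbol\theta\in\mathbb R^K$ let $\pi_{\boldsymbol\theta}(a)=\exp(\theta(a))/\sum_{b}\exp(\theta(b))$ be the softmax policy over $K$ actions and define $$\Phi_\eta(\boldsymbol\theta)=\pi_{\boldsymbol\theta}^\top\mathbf r+\frac1\eta\sum_{a}\log\pi_{\boldsymbol\theta}(a).$$ Let $H(\boldsymbol\theta)\in\mathbb R^{K\times K}$ be the Hessian of $\Phi_\eta$ at $\boldsymbol\theta$. Then for all $\boldsymbol\theta\in\mathbb R^K$, all $\mathbf r\in\mathbb R^K$ and all $\mathbf y\in\mathbb R^K$, $$\big|\mathbf y^\top H(\boldsymbol\theta)\mathbf y\big|\le 3\Big(\|\nabla_{\boldsymbol\theta}\Phi_\eta(\boldsymbol\theta)\|_2+\frac{5K}{\eta}\Big)\|\mathbf y\|_2^2 .$$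
   Context: $\Phi_\eta$ is the log-barrier regularized expected reward of a softmax policy in a $K$-armed bandit with mean reward vector $\mathbf r$; $1/\eta$ is the barrier strength. *)

theory Defs
  imports "HOL-Analysis.Analysis"
begin

text \<open>Softmax policy over the finite action type 'n (K = CARD('n)).\<close>
definition softmax :: "real^'n::finite \<Rightarrow> 'n \<Rightarrow> real" where
  "softmax \<theta> a = exp (\<theta> $ a) / (\<Sum>b\<in>UNIV. exp (\<theta> $ b))"

definition Phi :: "real \<Rightarrow> real^'n::finite \<Rightarrow> real^'n \<Rightarrow> real" where
  "Phi \<eta> r \<theta> = (\<Sum>a\<in>UNIV. softmax \<theta> a * r $ a) + (1 / \<eta>) * (\<Sum>a\<in>UNIV. ln (softmax \<theta> a))"

definition grad :: "(real^'n::finite \<Rightarrow> real) \<Rightarrow> real^'n \<Rightarrow> real^'n" where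
  "grad f x = (SOME g. (f has_derivative (\<lambda>h. g \<bullet> h)) (at x))"

definition hessian :: "(real^'n::finite \<Rightarrow> real) \<Rightarrow> real^'n \<Rightarrow> real^'n^'n" where
  "hessian f x = jacobian (grad f) (at x)"

end

theory Submission
  imports Defs
begin

text \<open>
  Write \<pi> for the softmax policy, E for expectation under \<pi>, u(a) = \<pi>(a) (r(a) - E r) for the
  gradient of the expected reward and m = E y. Since the derivative of \<pi>(a) in direction h is
  \<pi>(a) (h(a) - E h), the Hessian quadratic form of Phi is
  y'Hy = \<Sum>a u(a) y(a)^2 - 2 (u \<bullet> y) m - (K / \<eta>) Var(y),
  with the variance taken under \<pi>. The three terms are bounded by |u| |y|^2, 2 |u| |y|^2 and
  (K / \<eta>) |y|^2, and |u| \<le> |grad Phi| + 2K / \<eta> because the barrier part (1 - K \<pi>(a)) / \<eta>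
  of the gradient has l1-norm at most 2K / \<eta>. Altogether |y'Hy| \<le> (3 |grad Phi| + 7K / \<eta>) |y|^2.
\<close>

lemma has_derivative_vec_nth [derivative_intros]:
  "(f has_derivative f') F \<Longrightarrow> ((\<lambda>x. f x $ i) has_derivative (\<lambda>h. f' h $ i)) F"
  by (rule bounded_linear.has_derivative[OF bounded_linear_vec_nth])

lemma has_derivative_vec_componentwise:
  fixes f :: "'a::real_normed_vector \<Rightarrow> real^'n::finite"
  assumes "\<And>i. ((\<lambda>x. f x $ i) has_derivative (\<lambda>h. f' h $ i)) (at a within S)"
  shows "(f has_derivative f') (at a within S)"
  using assms by (auto simp: has_derivative_componentwise_within[of f] Basis_vec_def inner_axis)

lemma grad_eqI:
  fixes f :: "real^'n::finite \<Rightarrow> real"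
  assumes "(f has_derivative (\<lambda>h. g \<bullet> h)) (at x)"
  shows "grad f x = g"
  unfolding grad_def
proof (rule some_equality)
  fix g' assume "(f has_derivative (\<lambda>h. g' \<bullet> h)) (at x)"
  with assms have "(\<lambda>h. g \<bullet> h) = (\<lambda>h. g' \<bullet> h)" by (rule has_derivative_unique)
  then show "g' = g" by (metis vector_eq_rdot)
qed (fact assms)

lemma hessian_apply_eqI:
  fixes f :: "real^'n::finite \<Rightarrow> real"
  assumes "\<And>x. (f has_derivative (\<lambda>h. G x \<bullet> h)) (at x)"
    and "(G has_derivative G') (at x)"
  shows "hessian f x *v y = G' y"
proof -
  have "grad f = G" using assms(1) by (simp add: grad_eqI ext)
  moreover have "(G has_derivative (\<lambda>h. jacobian G (at x) *v h)) (at x)"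
    using assms(2) jacobian_works differentiableI by blast
  then have "(\<lambda>h. jacobian G (at x) *v h) = G'"
    using assms(2) by (rule has_derivative_unique)
  ultimately show ?thesis unfolding hessian_def by metis
qed

definition softmax_mean :: "real^'n::finite \<Rightarrow> real^'n \<Rightarrow> real" where
  "softmax_mean \<theta> v = (\<Sum>a\<in>UNIV. softmax \<theta> a * v $ a)"

definition softmax_mean_grad :: "real^'n::finite \<Rightarrow> real^'n \<Rightarrow> real^'n" where
  "softmax_mean_grad \<theta> v = (\<chi> a. softmax \<theta> a * (v $ a - softmax_mean \<theta> v))"

lemma sum_exp_pos: "(\<Sum>b\<in>UNIV. exp (\<theta> $ b)) > 0" for \<theta> :: "real^'n::finite"
  by (rule sum_pos) auto

lemma softmax_pos: "softmax \<theta> a > 0"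
  using sum_exp_pos[of \<theta>] by (simp add: softmax_def)

lemma sum_softmax: "(\<Sum>a\<in>UNIV. softmax \<theta> a) = 1"
  using sum_exp_pos[of \<theta>] by (simp add: softmax_def flip: sum_divide_distrib)

lemma softmax_le_1: "softmax \<theta> a \<le> 1"
proof -
  have "softmax \<theta> a \<le> (\<Sum>b\<in>UNIV. softmax \<theta> b)"
    by (rule member_le_sum) (auto intro: less_imp_le softmax_pos)
  then show ?thesis by (simp add: sum_softmax)
qed

lemma ln_softmax: "ln (softmax \<theta> a) = \<theta> $ a - ln (\<Sum>b\<in>UNIV. exp (\<theta> $ b))"
  using sum_exp_pos[of \<theta>] by (simp add: softmax_def ln_div)

lemma abs_softmax_mean_le: "\<bar>softmax_mean \<theta> v\<bar> \<le> norm v"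
proof -
  have "\<bar>softmax_mean \<theta> v\<bar> \<le> (\<Sum>a\<in>UNIV. \<bar>softmax \<theta> a * v $ a\<bar>)"
    unfolding softmax_mean_def by (rule sum_abs)
  also have "\<dots> \<le> (\<Sum>a\<in>UNIV. softmax \<theta> a * norm v)"
    by (rule sum_mono) (simp add: abs_mult mult_left_mono component_le_norm_cart softmax_pos less_imp_le)
  finally show ?thesis by (simp add: sum_softmax flip: sum_distrib_right)
qed

lemma has_derivative_ln_sum_exp:
  "((\<lambda>\<theta>. ln (\<Sum>b\<in>UNIV. exp (\<theta> $ b))) has_derivative softmax_mean \<theta>) (at \<theta>)"
  using sum_exp_pos[of \<theta>]
  by (auto intro!: derivative_eq_intros
      simp: softmax_mean_def softmax_def sum_divide_distrib field_simps)

lemma has_derivative_softmax: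
  "((\<lambda>\<theta>. softmax \<theta> a) has_derivative (\<lambda>h. softmax \<theta> a * (h $ a - softmax_mean \<theta> h))) (at \<theta>)"
proof -
  have softmax_eq: "softmax \<theta>' a = exp (\<theta>' $ a - ln (\<Sum>b\<in>UNIV. exp (\<theta>' $ b)))" for \<theta>'
    by (metis ln_softmax softmax_pos exp_ln)
  have "((\<lambda>\<theta>. exp (\<theta> $ a - ln (\<Sum>b\<in>UNIV. exp (\<theta> $ b)))) has_derivative
      (\<lambda>h. (h $ a - softmax_mean \<theta> h) * exp (\<theta> $ a - ln (\<Sum>b\<in>UNIV. exp (\<theta> $ b))))) (at \<theta>)"
    by (intro has_derivative_exp has_derivative_diff has_derivative_vec_nth has_derivative_ident
        has_derivative_ln_sum_exp)
  then show ?thesis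
    by (simp only: softmax_eq[symmetric] mult.commute)
qed

lemma has_derivative_softmax_mean:
  "((\<lambda>\<theta>. softmax_mean \<theta> v) has_derivative (\<lambda>h. softmax_mean_grad \<theta> v \<bullet> h)) (at \<theta>)"
proof -
  have "(\<Sum>a\<in>UNIV. softmax \<theta> a * (h $ a - softmax_mean \<theta> h) * v $ a)
      = softmax_mean_grad \<theta> v \<bullet> h" for h
    by (simp add: softmax_mean_grad_def softmax_mean_def inner_vec_def algebra_simps
        sum_subtractf sum_distrib_left sum_distrib_right sum_softmax)
      (subst sum.swap, simp add: algebra_simps)
  then show ?thesis
    unfolding softmax_mean_def[of _ v]
    by (auto intro!: derivative_eq_intros has_derivative_softmax)
qed

definition Phi_grad :: "real \<Rightarrow> real^'n::finite \<Rightarrow> real^'n \<Rightarrow> real^'n" where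
  "Phi_grad \<eta> r \<theta> =
     softmax_mean_grad \<theta> r + (1 / \<eta>) *\<^sub>R (\<chi> a. 1 - real CARD('n) * softmax \<theta> a)"

lemma Phi_eq:
  "Phi \<eta> r \<theta> = softmax_mean \<theta> r
     + (1 / \<eta>) * ((\<Sum>a\<in>UNIV. \<theta> $ a) - real CARD('n) * ln (\<Sum>b\<in>UNIV. exp (\<theta> $ b)))"
  for \<theta> :: "real^'n::finite"
  by (simp add: Phi_def softmax_mean_def ln_softmax sum_subtractf)

lemma has_derivative_Phi:
  fixes \<theta> :: "real^'n::finite"
  shows "(Phi \<eta> r has_derivative (\<lambda>h. Phi_grad \<eta> r \<theta> \<bullet> h)) (at \<theta>)"
proof -
  have "((\<lambda>\<theta>. softmax_mean \<theta> r
      + (1 / \<eta>) * ((\<Sum>a\<in>UNIV. \<theta> $ a) - real CARD('n) * ln (\<Sum>b\<in>UNIV. exp (\<theta> $ b))))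
    has_derivative (\<lambda>h. softmax_mean_grad \<theta> r \<bullet> h
      + (1 / \<eta>) * ((\<Sum>a\<in>UNIV. h $ a) - real CARD('n) * softmax_mean \<theta> h))) (at \<theta>)"
    by (intro has_derivative_add has_derivative_mult_right has_derivative_diff has_derivative_sum
        has_derivative_vec_nth has_derivative_ident has_derivative_softmax_mean has_derivative_ln_sum_exp)
  moreover have "softmax_mean_grad \<theta> r \<bullet> h
      + (1 / \<eta>) * ((\<Sum>a\<in>UNIV. h $ a) - real CARD('n) * softmax_mean \<theta> h)
      = Phi_grad \<eta> r \<theta> \<bullet> h" for h :: "real^'n"
    by (simp add: Phi_grad_def softmax_mean_def inner_add_left inner_vec_def algebra_simps
        sum.distrib sum_subtractf sum_distrib_left)
  ultimately show ?thesis
    unfolding Phi_eq[abs_def] by simp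
qed

lemma grad_Phi: "grad (Phi \<eta> r) \<theta> = Phi_grad \<eta> r \<theta>"
  by (rule grad_eqI[OF has_derivative_Phi])

definition Phi_grad_deriv :: "real \<Rightarrow> real^'n::finite \<Rightarrow> real^'n \<Rightarrow> real^'n \<Rightarrow> real^'n" where
  "Phi_grad_deriv \<eta> r \<theta> h =
     (\<chi> a. (softmax_mean_grad \<theta> r $ a - real CARD('n) / \<eta> * softmax \<theta> a) * (h $ a - softmax_mean \<theta> h)
        - softmax \<theta> a * (softmax_mean_grad \<theta> r \<bullet> h))"

lemma has_derivative_Phi_grad:
  fixes \<theta> r :: "real^'n::finite"
  shows "(Phi_grad \<eta> r has_derivative Phi_grad_deriv \<eta> r \<theta>) (at \<theta>)"
proof (rule has_derivative_vec_componentwise)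
  fix a
  \<comment> \<open>named, so that the derivative rules treat \<open>1 / \<eta>\<close> as a constant and not as a quotient\<close>
  define c where "c = 1 / \<eta>"
  have "((\<lambda>\<theta>. softmax \<theta> a * (r $ a - softmax_mean \<theta> r) + c * (1 - real CARD('n) * softmax \<theta> a))
      has_derivative (\<lambda>h. (softmax_mean_grad \<theta> r $ a - c * real CARD('n) * softmax \<theta> a)
        * (h $ a - softmax_mean \<theta> h) - softmax \<theta> a * (softmax_mean_grad \<theta> r \<bullet> h))) (at \<theta>)"
    by (auto intro!: derivative_eq_intros has_derivative_softmax has_derivative_softmax_mean
        simp: softmax_mean_grad_def algebra_simps)
  then show "((\<lambda>\<theta>. Phi_grad \<eta> r \<theta> $ a) has_derivative (\<lambda>h. Phi_grad_deriv \<eta> r \<theta> h $ a)) (at \<theta>)"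
    by (simp add: Phi_grad_def Phi_grad_deriv_def softmax_mean_grad_def c_def)
qed

lemma hessian_Phi: "hessian (Phi \<eta> r) \<theta> *v y = Phi_grad_deriv \<eta> r \<theta> y"
  by (rule hessian_apply_eqI[OF has_derivative_Phi has_derivative_Phi_grad])

lemma inner_Phi_grad_deriv:
  fixes \<eta> :: real and \<theta> r y :: "real^'n::finite"
  defines "u \<equiv> softmax_mean_grad \<theta> r" and "m \<equiv> softmax_mean \<theta> y" and "k \<equiv> real CARD('n) / \<eta>"
  shows "y \<bullet> Phi_grad_deriv \<eta> r \<theta> y = (\<Sum>a\<in>UNIV. u $ a * (y $ a)\<^sup>2) - 2 * (u \<bullet> y) * m
           - k * ((\<Sum>a\<in>UNIV. softmax \<theta> a * (y $ a)\<^sup>2) - m\<^sup>2)"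
proof -
  have "y \<bullet> Phi_grad_deriv \<eta> r \<theta> y = (\<Sum>a\<in>UNIV. u $ a * (y $ a)\<^sup>2
      - m * (u $ a * y $ a) - k * (softmax \<theta> a * (y $ a)\<^sup>2)
      + k * m * (softmax \<theta> a * y $ a) - (u \<bullet> y) * (softmax \<theta> a * y $ a))"
    unfolding Phi_grad_deriv_def inner_vec_def[of y] u_def[symmetric] m_def[symmetric] k_def[symmetric]
    by (intro sum.cong) (simp_all add: algebra_simps power2_eq_square)
  also have "\<dots> = (\<Sum>a\<in>UNIV. u $ a * (y $ a)\<^sup>2) - m * (u \<bullet> y)
      - k * (\<Sum>a\<in>UNIV. softmax \<theta> a * (y $ a)\<^sup>2) + k * m * m - (u \<bullet> y) * m"
    by (simp add: sum.distrib sum_subtractf inner_vec_def m_def softmax_mean_def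
        flip: sum_distrib_left)
  finally show ?thesis
    by (simp add: algebra_simps power2_eq_square)
qed

lemma power2_norm_vec_eq_sum:
  fixes y :: "real^'n::finite"
  shows "(norm y)\<^sup>2 = (\<Sum>a\<in>UNIV. (y $ a)\<^sup>2)"
  unfolding power2_norm_eq_inner inner_vec_def by (simp add: power2_eq_square)

lemma abs_sum_mult_square_le:
  fixes u y :: "real^'n::finite"
  shows "\<bar>\<Sum>a\<in>UNIV. u $ a * (y $ a)\<^sup>2\<bar> \<le> norm u * (norm y)\<^sup>2"
proof -
  have "\<bar>\<Sum>a\<in>UNIV. u $ a * (y $ a)\<^sup>2\<bar> \<le> (\<Sum>a\<in>UNIV. norm u * (y $ a)\<^sup>2)"
    by (rule order_trans[OF sum_abs sum_mono])
      (simp add: abs_mult mult_right_mono component_le_norm_cart)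
  also have "\<dots> = norm u * (norm y)\<^sup>2"
    by (simp add: power2_norm_vec_eq_sum sum_distrib_left)
  finally show ?thesis .
qed

lemma abs_softmax_variance_le:
  "\<bar>(\<Sum>a\<in>UNIV. softmax \<theta> a * (y $ a)\<^sup>2) - (softmax_mean \<theta> y)\<^sup>2\<bar> \<le> (norm y)\<^sup>2"
proof -
  have "0 \<le> (\<Sum>a\<in>UNIV. softmax \<theta> a * (y $ a)\<^sup>2)"
    by (intro sum_nonneg) (simp add: softmax_pos less_imp_le)
  moreover have "(\<Sum>a\<in>UNIV. softmax \<theta> a * (y $ a)\<^sup>2) \<le> (\<Sum>a\<in>UNIV. (y $ a)\<^sup>2)"
    by (intro sum_mono) (simp add: mult_left_le_one_le softmax_le_1 softmax_pos less_imp_le)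
  moreover have "(softmax_mean \<theta> y)\<^sup>2 \<le> (norm y)\<^sup>2"
    using abs_softmax_mean_le by (metis abs_ge_zero power2_abs power_mono)
  ultimately show ?thesis
    unfolding power2_norm_vec_eq_sum abs_le_iff by (smt (verit) zero_le_power2)
qed

lemma norm_softmax_mean_grad_le:
  fixes \<theta> r :: "real^'n::finite"
  assumes "\<eta> > 0"
  shows "norm (softmax_mean_grad \<theta> r) \<le> norm (Phi_grad \<eta> r \<theta>) + 2 * real CARD('n) / \<eta>"
proof -
  define w where "w = (\<chi> a. 1 - real CARD('n) * softmax \<theta> a)"
  have "norm w \<le> (\<Sum>a\<in>UNIV. \<bar>w $ a\<bar>)"
    by (rule norm_le_l1_cart)
  also have "\<dots> \<le> (\<Sum>a\<in>UNIV. 1 + real CARD('n) * softmax \<theta> a)"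
    by (intro sum_mono) (simp add: w_def abs_le_iff softmax_pos less_imp_le)
  also have "\<dots> = 2 * real CARD('n)"
    by (simp add: sum.distrib sum_softmax flip: sum_distrib_left)
  finally have "norm ((1 / \<eta>) *\<^sub>R w) \<le> 2 * real CARD('n) / \<eta>"
    using assms by (simp add: divide_right_mono)
  moreover have "softmax_mean_grad \<theta> r = Phi_grad \<eta> r \<theta> - (1 / \<eta>) *\<^sub>R w"
    by (simp add: Phi_grad_def w_def)
  ultimately show ?thesis
    by (metis norm_triangle_ineq4 add_left_mono order_trans)
qed

lemma abs_inner_Phi_grad_deriv_le:
  fixes \<theta> r y :: "real^'n::finite"
  assumes "\<eta> > 0"
  shows "\<bar>y \<bullet> Phi_grad_deriv \<eta> r \<theta> y\<bar>
           \<le> (3 * norm (softmax_mean_grad \<theta> r) + real CARD('n) / \<eta>) * (norm y)\<^sup>2"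
proof -
  define u where "u = softmax_mean_grad \<theta> r"
  define m where "m = softmax_mean \<theta> y"
  have "\<bar>u \<bullet> y\<bar> * \<bar>m\<bar> \<le> (norm u * norm y) * norm y"
    unfolding m_def by (rule mult_mono[OF Cauchy_Schwarz_ineq2 abs_softmax_mean_le]) auto
  then have "\<bar>2 * (u \<bullet> y) * m\<bar> \<le> 2 * norm u * (norm y)\<^sup>2"
    by (simp add: abs_mult power2_eq_square algebra_simps)
  moreover have "\<bar>real CARD('n) / \<eta> * ((\<Sum>a\<in>UNIV. softmax \<theta> a * (y $ a)\<^sup>2) - m\<^sup>2)\<bar>
      \<le> real CARD('n) / \<eta> * (norm y)\<^sup>2"
    using assms unfolding abs_mult m_def
    by (intro mult_mono abs_softmax_variance_le) auto
  moreover note abs_sum_mult_square_le[of u y]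
  ultimately show ?thesis
    unfolding inner_Phi_grad_deriv u_def[symmetric] m_def[symmetric] distrib_right by linarith
qed

theorem lemma4p1:
  fixes \<eta> :: real and r \<theta> y :: "real^'n::finite"
  assumes "CARD('n) \<ge> 2" and "\<eta> > 0"
  shows "\<bar>y \<bullet> (hessian (Phi \<eta> r) \<theta> *v y)\<bar>
           \<le> 3 * (norm (grad (Phi \<eta> r) \<theta>) + 5 * real CARD('n) / \<eta>) * (norm y)\<^sup>2"
proof -
  have "\<bar>y \<bullet> (hessian (Phi \<eta> r) \<theta> *v y)\<bar>
      \<le> (3 * norm (softmax_mean_grad \<theta> r) + real CARD('n) / \<eta>) * (norm y)\<^sup>2"
    unfolding hessian_Phi using assms(2) by (rule abs_inner_Phi_grad_deriv_le)
  also have "\<dots> \<le> (3 * (norm (Phi_grad \<eta> r \<theta>) + 2 * real CARD('n) / \<eta>) + real CARD('n) / \<eta>) * (norm y)\<^sup>2"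
    using norm_softmax_mean_grad_le[OF assms(2), where \<theta>=\<theta> and r=r] by (intro mult_right_mono) auto
  also have "\<dots> \<le> 3 * (norm (grad (Phi \<eta> r) \<theta>) + 5 * real CARD('n) / \<eta>) * (norm y)\<^sup>2"
    using assms(2) by (intro mult_right_mono) (auto simp: grad_Phi field_simps)
  finally show ?thesis .
qed

end
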